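(* Fix $\vartheta_1\in(0,\pi/2)$. For an integer $k\ge0$, let $\eta_k$ be the unique solution of $\tan\eta=\eta$ in $[k\pi,k\pi+\pi/2)$ and $\eta_k'=\eta_k-k\pi$. If $\vartheta_1<\eta_k'$, then $$\Phi(\eta_{k+1})\ge\Phi(\eta_k)+\pi(1-\cos\vartheta_1).$$ In particular $\lim_{k\to\infty}\Phi(\eta_k)=\infty$.
   Context: For integers $k\ge0$ let $I_k=[\vartheta_1+k\pi,(k+1)\pi-\vartheta_1]$. For $\eta\in I_k$ set $\gamma(\eta)=\sqrt{1-\sin^2\vartheta_1/\sin^2\eta}$ and $$\Phi(\eta)=-\eta\,\gamma(\eta)+k\pi+\arccos\Big(\frac{\cos(\eta-k\pi)}{\cos\vartheta_1}\Big),\qquad\arccos\in[0,\pi].$$ (When $\vartheta_1<\eta_k'$, one has $\eta_k\in I_k$ and $\eta_{k+1}\in I_{k+1}$; $\Phi(\eta_k)$ is defined for all large $k$ since $\eta_k'\to\pi/2$.) *)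

theory Defs
  imports "HOL-Analysis.Analysis"
begin

definition eta :: "nat \<Rightarrow> real" where
  "eta k = (THE x. x \<in> {real k * pi ..< real k * pi + pi / 2} \<and> tan x = x)"

definition eta' :: "nat \<Rightarrow> real" where
  "eta' k = eta k - real k * pi"

definition gam :: "real \<Rightarrow> real \<Rightarrow> real" where
  "gam th1 x = sqrt (1 - (sin th1)\<^sup>2 / (sin x)\<^sup>2)"

text \<open>Phi on the interval I_k (index k explicit).\<close>
definition Phi :: "real \<Rightarrow> nat \<Rightarrow> real \<Rightarrow> real" where
  "Phi th1 k x = - x * gam th1 x + real k * pi + arccos (cos (x - real k * pi) / cos th1)"

end

theory Submission
  imports Defs "HOL-Real_Asymp.Real_Asymp"
begin

(* Write E = arctan_excess, E x = x - arctan x, and D x = sqrt ((x cos th1)^2 - sin^2 th1). The equation tan x = x on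
   [k pi, k pi + pi/2) says E x = k pi, and at such x one has x gam x = D x and
   arccos (cos (x - k pi) / cos th1) = arctan (D x), so Phi (eta k) = E (eta k) - E (D (eta k)).
   The chain rule gives (E o D)' x = x D x / (1 + x^2) <= cos th1 * E' x, because D x <= x cos th1.
   Hence from eta k to eta (k+1), where E grows by pi, the term E o D grows by at most pi cos th1. *)

definition arctan_excess :: "real \<Rightarrow> real" where
  "arctan_excess x = x - arctan x"

lemma DERIV_arctan_excess: "DERIV arctan_excess x :> x\<^sup>2 / (1 + x\<^sup>2)"
proof -
  have "0 < 1 + x\<^sup>2" by (simp add: add_pos_nonneg)
  then show ?thesis
    unfolding arctan_excess_def
    by (auto intro!: derivative_eq_intros simp: field_simps)
qed

lemma strict_mono_on_arctan_excess: "strict_mono_on {0..} arctan_excess"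
proof (rule strict_mono_onI)
  fix a b :: real assume "a \<in> {0..}" "a < b"
  show "arctan_excess a < arctan_excess b"
  proof (rule DERIV_pos_imp_increasing_open[OF \<open>a < b\<close>])
    fix x assume "a < x"
    then have "0 < x\<^sup>2 / (1 + x\<^sup>2)" using \<open>a \<in> {0..}\<close> by (simp add: add_pos_nonneg)
    then show "\<exists>y. DERIV arctan_excess x :> y \<and> 0 < y" using DERIV_arctan_excess by blast
  next
    show "continuous_on {a..b} arctan_excess"
      unfolding arctan_excess_def by (intro continuous_intros)
  qed
qed

lemma ex1_arctan_excess_eq:
  assumes "0 \<le> y"
  shows "\<exists>!x. 0 \<le> x \<and> arctan_excess x = y"
proof (rule ex_ex1I)
  have "arctan_excess 0 \<le> y" "y \<le> arctan_excess (y + pi / 2)"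
    using assms arctan_ubound[of "y + pi / 2"] by (simp_all add: arctan_excess_def)
  moreover have "\<forall>x. 0 \<le> x \<and> x \<le> y + pi / 2 \<longrightarrow> isCont arctan_excess x"
    unfolding arctan_excess_def by (auto intro!: continuous_intros)
  ultimately obtain x where "0 \<le> x" "arctan_excess x = y"
    using IVT[of arctan_excess 0 y "y + pi / 2"] assms by auto
  then show "\<exists>x. 0 \<le> x \<and> arctan_excess x = y" by blast
next
  show "x = x'" if "0 \<le> x \<and> arctan_excess x = y" "0 \<le> x' \<and> arctan_excess x' = y" for x x'
    using that strict_mono_on_arctan_excess by (metis atLeast_iff strict_mono_on_eqD)
qed

lemma tan_eq_self_iff_arctan_excess:
  "x \<in> {real k * pi ..< real k * pi + pi / 2} \<and> tan x = x \<longleftrightarrow>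
     0 \<le> x \<and> arctan_excess x = real k * pi"
proof
  assume x: "x \<in> {real k * pi ..< real k * pi + pi / 2} \<and> tan x = x"
  then have "tan (x - real k * pi) = x"
    using tan_periodic_nat[of "x - real k * pi" k] by simp
  moreover have "- (pi / 2) < x - real k * pi" "x - real k * pi < pi / 2" using x by auto
  ultimately have "arctan x = x - real k * pi" using arctan_tan by metis
  moreover have "0 \<le> x" using x by (auto intro: order_trans[rotated])
  ultimately show "0 \<le> x \<and> arctan_excess x = real k * pi" by (simp add: arctan_excess_def)
next
  assume x: "0 \<le> x \<and> arctan_excess x = real k * pi"
  then have "x = arctan x + real k * pi" by (simp add: arctan_excess_def)
  moreover have "0 \<le> arctan x" "arctan x < pi / 2" using x arctan_ubound[of x] by simp_all
  moreover have "tan (arctan x + real k * pi) = x" by (simp add: tan_periodic_nat tan_arctan)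
  ultimately show "x \<in> {real k * pi ..< real k * pi + pi / 2} \<and> tan x = x"
    by (simp del: zero_le_arctan_iff)
qed

lemma eta_nonneg: "0 \<le> eta k"
  and arctan_excess_eta: "arctan_excess (eta k) = real k * pi"
proof -
  have "0 \<le> eta k \<and> arctan_excess (eta k) = real k * pi"
    unfolding eta_def tan_eq_self_iff_arctan_excess
    by (rule theI') (rule ex1_arctan_excess_eq, simp)
  then show "0 \<le> eta k" "arctan_excess (eta k) = real k * pi" by simp_all
qed

lemma eta'_eq_arctan_eta: "eta' k = arctan (eta k)"
  using arctan_excess_eta[of k] by (simp add: eta'_def arctan_excess_def)

lemma eta_bounds: "real k * pi \<le> eta k" "eta k < real k * pi + pi / 2"
proof -
  have "0 \<le> arctan (eta k)" "arctan (eta k) < pi / 2"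
    using eta_nonneg[of k] arctan_ubound by simp_all
  moreover have "eta k - real k * pi = arctan (eta k)"
    using eta'_eq_arctan_eta[of k] by (simp add: eta'_def)
  ultimately show "real k * pi \<le> eta k" "eta k < real k * pi + pi / 2" by linarith+
qed

lemma eta_less_eta_Suc: "eta k < eta (Suc k)"
  using eta_bounds[of k] eta_bounds[of "Suc k"] pi_gt_zero by (simp add: algebra_simps)

lemma eta'_tendsto: "eta' \<longlonglongrightarrow> pi / 2"
proof -
  have "real k \<le> eta k" for k
    using eta_bounds(1)[of k] pi_gt3 mult_le_cancel_left1[of "real k" pi] by linarith
  then have "filterlim eta at_top sequentially"
    by (intro filterlim_at_top_mono[OF filterlim_real_sequentially]) simp
  then show ?thesis
    unfolding eta'_eq_arctan_eta[abs_def] by (rule filterlim_compose[OF tendsto_arctan_at_top])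
qed

lemma eta_pos_and_sin_squared_less:
  assumes "0 < th1" "th1 < pi / 2" "th1 < eta' k"
  shows "0 < eta k" "(sin th1)\<^sup>2 < (cos th1 * eta k)\<^sup>2"
proof -
  have "arctan (tan th1) < arctan (eta k)"
    using assms arctan_tan[of th1] eta'_eq_arctan_eta[of k] by simp
  then have "sin th1 / cos th1 < eta k" by (simp add: arctan_less_iff tan_def)
  moreover have "0 < cos th1" "0 < sin th1" using assms by (simp_all add: cos_gt_zero sin_gt_zero)
  ultimately have "sin th1 < cos th1 * eta k" by (simp add: divide_less_eq mult.commute)
  with \<open>0 < sin th1\<close> show "0 < eta k" "(sin th1)\<^sup>2 < (cos th1 * eta k)\<^sup>2"
    using \<open>0 < cos th1\<close> by (smt (verit) zero_less_mult_iff, simp add: power_strict_mono)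
qed

lemma sin_eta_squared: "(sin (eta k))\<^sup>2 = (eta k)\<^sup>2 / (1 + (eta k)\<^sup>2)"
proof -
  have "eta k = arctan (eta k) + real k * pi"
    using eta'_eq_arctan_eta[of k] by (simp add: eta'_def)
  then have "sin (eta k) = (-1) ^ k * sin (arctan (eta k))"
    by (metis sin_add sin_npi cos_npi mult_zero_right add_0_right mult.commute)
  then show ?thesis by (simp add: power_mult_distrib sin_arctan power_divide flip: power_mult)
qed

lemma cos_eta_shift: "cos (eta k - real k * pi) = 1 / sqrt (1 + (eta k)\<^sup>2)"
  using eta'_eq_arctan_eta[of k] by (simp add: eta'_def cos_arctan)

lemma Phi_eta_eq:
  assumes "0 < th1" "th1 < pi / 2" "th1 < eta' k"
  shows "Phi th1 k (eta k) =
    arctan_excess (eta k) - arctan_excess (sqrt ((cos th1 * eta k)\<^sup>2 - (sin th1)\<^sup>2))"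
proof -
  define c s e where "c = cos th1" and "s = sin th1" and "e = eta k"
  define D where "D = sqrt ((c * e)\<^sup>2 - s\<^sup>2)"
  have c: "0 < c" and sc: "s\<^sup>2 + c\<^sup>2 = 1"
    using assms by (simp_all add: c_def cos_gt_zero s_def)
  have e: "0 < e" and "s\<^sup>2 < (c * e)\<^sup>2"
    using eta_pos_and_sin_squared_less[OF assms] by (simp_all add: c_def s_def e_def)
  then have D: "0 < D" "D\<^sup>2 = (c * e)\<^sup>2 - s\<^sup>2" by (simp_all add: D_def)
  have "D\<^sup>2 = e\<^sup>2 - s\<^sup>2 * (1 + e\<^sup>2)"
    using D(2) sc by (simp add: power_mult_distrib algebra_simps flip: eq_diff_eq)
  then have "1 - s\<^sup>2 / (sin e)\<^sup>2 = D\<^sup>2 / e\<^sup>2"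
    using e by (simp add: e_def sin_eta_squared field_simps)
  then have gam: "e * gam th1 e = D"
    using e D(1) by (simp add: gam_def s_def[symmetric] real_sqrt_divide)
  have "1 + D\<^sup>2 = (c * sqrt (1 + e\<^sup>2))\<^sup>2"
    using D(2) sc by (simp add: power_mult_distrib algebra_simps add_pos_nonneg)
  then have "cos (e - real k * pi) / c = cos (arctan D)"
    using c by (simp add: e_def cos_eta_shift cos_arctan add_pos_nonneg)
  moreover have "0 \<le> arctan D" "arctan D \<le> pi"
    using D(1) arctan_ubound[of D] pi_gt_zero by (simp, linarith)
  ultimately have "arccos (cos (e - real k * pi) / c) = arctan D"
    by (simp add: arccos_cos)
  moreover have "arctan_excess e = real k * pi" using arctan_excess_eta by (simp add: e_def)
  ultimately show ?thesis
    using gam by (simp add: Phi_def arctan_excess_def c_def s_def e_def D_def)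
qed

lemma arctan_excess_sqrt_diff_le:
  fixes a b c s :: real
  assumes "0 < c" "s\<^sup>2 + c\<^sup>2 = 1" "0 < a" "s\<^sup>2 < (c * a)\<^sup>2" "a \<le> b"
  defines "D \<equiv> \<lambda>x. sqrt ((c * x)\<^sup>2 - s\<^sup>2)"
  shows "arctan_excess (D b) - arctan_excess (D a) \<le> c * (arctan_excess b - arctan_excess a)"
proof -
  have "\<exists>y. DERIV (\<lambda>x. arctan_excess (D x) - c * arctan_excess x) x :> y \<and> y \<le> 0"
    if x: "a \<le> x" "x \<le> b" for x
  proof -
    have "(c * a)\<^sup>2 \<le> (c * x)\<^sup>2"
      using assms x by (intro power_mono mult_left_mono) auto
    then have q: "0 < (c * x)\<^sup>2 - s\<^sup>2" using assms by linarith
    then have D: "0 < D x" "(D x)\<^sup>2 = (c * x)\<^sup>2 - s\<^sup>2" by (simp_all add: D_def)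
    have "DERIV D x :> c\<^sup>2 * x / D x"
      unfolding D_def using q
      by (auto intro!: derivative_eq_intros simp: field_simps power2_eq_square)
    then have "DERIV (\<lambda>x. arctan_excess (D x) - c * arctan_excess x) x :>
        (D x)\<^sup>2 / (1 + (D x)\<^sup>2) * (c\<^sup>2 * x / D x) - c * (x\<^sup>2 / (1 + x\<^sup>2))"
      by (intro DERIV_diff DERIV_chain2[OF DERIV_arctan_excess] DERIV_cmult DERIV_arctan_excess)
    also have "1 + (D x)\<^sup>2 = c\<^sup>2 * (1 + x\<^sup>2)"
      using D(2) assms(2) by (simp add: power_mult_distrib algebra_simps)
    also have "(D x)\<^sup>2 / (c\<^sup>2 * (1 + x\<^sup>2)) * (c\<^sup>2 * x / D x) - c * (x\<^sup>2 / (1 + x\<^sup>2))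
        = (D x - c * x) * x / (1 + x\<^sup>2)"
    proof -
      have "0 < 1 + x\<^sup>2" by (simp add: add_pos_nonneg)
      then show ?thesis using D(1) assms(1)
        by (simp add: divide_simps) (simp add: algebra_simps power2_eq_square)
    qed
    finally have "DERIV (\<lambda>x. arctan_excess (D x) - c * arctan_excess x) x :>
        (D x - c * x) * x / (1 + x\<^sup>2)" .
    moreover have "D x \<le> c * x"
      unfolding D_def using assms x by (intro real_le_lsqrt) auto
    then have "(D x - c * x) * x / (1 + x\<^sup>2) \<le> 0"
      using assms x by (intro divide_nonpos_pos mult_nonpos_nonneg) (auto simp: add_pos_nonneg)
    ultimately show ?thesis by blast
  qed
  from DERIV_nonpos_imp_nonincreasing[OF \<open>a \<le> b\<close> this] show ?thesis
    by (simp add: algebra_simps)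
qed

lemma Phi_eta_Suc_ge:
  assumes "0 < th1" "th1 < pi / 2" "th1 < eta' k"
  shows "Phi th1 k (eta k) + pi * (1 - cos th1) \<le> Phi th1 (Suc k) (eta (Suc k))"
proof -
  define c s where "c = cos th1" and "s = sin th1"
  have "th1 < eta' (Suc k)"
    using assms(3) arctan_monotone[OF eta_less_eta_Suc[of k]] by (simp add: eta'_eq_arctan_eta)
  then have Phi: "Phi th1 j (eta j) =
      arctan_excess (eta j) - arctan_excess (sqrt ((c * eta j)\<^sup>2 - s\<^sup>2))" if "j \<in> {k, Suc k}" for j
    using that Phi_eta_eq[OF assms(1,2)] assms(3) by (auto simp: c_def s_def)
  have "0 < c" using assms by (simp add: c_def cos_gt_zero)
  from arctan_excess_sqrt_diff_le[OF this _ eta_pos_and_sin_squared_less[OF assms, folded c_def s_def]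
      less_imp_le[OF eta_less_eta_Suc]]
  have "arctan_excess (sqrt ((c * eta (Suc k))\<^sup>2 - s\<^sup>2)) - arctan_excess (sqrt ((c * eta k)\<^sup>2 - s\<^sup>2))
      \<le> c * pi"
    by (simp add: c_def s_def arctan_excess_eta algebra_simps)
  then show ?thesis
    by (simp add: Phi arctan_excess_eta c_def algebra_simps)
qed

lemma filterlim_at_top_if_eventually_step_ge:
  fixes u :: "nat \<Rightarrow> real"
  assumes "0 < d" and "eventually (\<lambda>k. u k + d \<le> u (Suc k)) sequentially"
  shows "filterlim u at_top sequentially"
proof -
  obtain K where K: "\<And>k. K \<le> k \<Longrightarrow> u k + d \<le> u (Suc k)"
    using assms(2) unfolding eventually_sequentially by blast
  have "u K + (real k - real K) * d \<le> u k" if "K \<le> k" for k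
    using that
  proof (induction k rule: dec_induct)
    case (step k)
    then show ?case using K[of k] by (simp add: algebra_simps)
  qed simp
  then have "eventually (\<lambda>k. u K + (real k - real K) * d \<le> u k) sequentially"
    unfolding eventually_sequentially by blast
  moreover have "filterlim (\<lambda>k. u K + (real k - real K) * d) at_top sequentially"
    using \<open>0 < d\<close> by real_asymp
  ultimately show ?thesis
    by (rule filterlim_at_top_mono[rotated])
qed

theorem corollary5p28:
  fixes th1 :: real
  assumes "0 < th1" and "th1 < pi / 2"
  shows "(\<forall>k. th1 < eta' k \<longrightarrow>
            Phi th1 (Suc k) (eta (Suc k)) \<ge> Phi th1 k (eta k) + pi * (1 - cos th1))
         \<and> filterlim (\<lambda>k. Phi th1 k (eta k)) at_top sequentially"
proof
  show "\<forall>k. th1 < eta' k \<longrightarrow>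
      Phi th1 (Suc k) (eta (Suc k)) \<ge> Phi th1 k (eta k) + pi * (1 - cos th1)"
    using Phi_eta_Suc_ge[OF assms] by blast
  have "0 < pi * (1 - cos th1)"
    using assms cos_monotone_0_pi[of 0 th1] by simp
  moreover have "eventually (\<lambda>k. th1 < eta' k) sequentially"
    using order_tendstoD(1)[OF eta'_tendsto] assms(2) by blast
  then have "eventually (\<lambda>k. Phi th1 k (eta k) + pi * (1 - cos th1) \<le> Phi th1 (Suc k) (eta (Suc k)))
      sequentially"
    by eventually_elim (rule Phi_eta_Suc_ge[OF assms])
  ultimately show "filterlim (\<lambda>k. Phi th1 k (eta k)) at_top sequentially"
    by (rule filterlim_at_top_if_eventually_step_ge)
qed

end
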